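(* Let $D,n,r\ge 1$. For $0\le i<n$, let $X_{i}$ be the $(D+1)\times(D+1)$ matrix, with rows and columns indexed by $\{0,\dots,D\}$, whose $(k,\ell)$ entry is the commuting variable $x_{i,\ell}$ if $k+1=\ell$ and $0$ otherwise. Let $\mathcal{H}\subseteq\mathbb{F}^{\{x_{i,j}:0\le i<n,\,1\le j\le D\}}$ be a nonempty set of assignments to the commuting variables $x_{i,j}$ such that for every $1\le\ell\le D$, $\mathcal{H}$ is a hitting set for all polynomials computed by set-multilinear ABPs of width $\le r(D+1)$ and depth $\ell$ with respect to the variable partition $\bigsqcup_{j=1}^{\ell}\{x_{i,j}\}_{0\le i<n}$ (viewed as polynomials in all variables $x_{i,j}$). Let $\mathcal{H}'\subseteq(\mathbb{F}^{(D+1)\times(D+1)})^n$ be obtained by replacing each point $h\in\mathcal{H}$ by the tuple $(X_0(h),\dots,X_{n-1}(h))$ of the matrices $X_i$ with the variables evaluated at $h$. Then for every non-commutative polynomial $f\in\mathbb{F}\{x_0,\dots,x_{n-1}\}$ computed by a non-commutative ABP of width $\le r$ and depth $D$: $f$ is zero iff $f(A)$ is the zero matrix for every $A\in\mathcal{H}'$.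
   Context: $\mathbb{F}\{x_0,\dots,x_{n-1}\}$ denotes the ring of polynomials in non-commuting variables over $\mathbb{F}$. A (non-commutative) ABP of depth $D$ is a directed acyclic graph with vertices partitioned into layers $0,\dots,D$, a single source in layer $0$, a single sink in layer $D$, edges only from layer $i-1$ to layer $i$, each labeled by an affine linear form; it computes the sum over source-to-sink paths of the products of labels in path order; its width is the maximum number of vertices in a layer. A set-multilinear ABP of depth $\ell$ with respect to a partition $Y_1\sqcup\dots\sqcup Y_\ell$ is an ABP of depth $\ell$ in which every edge from layer $j-1$ to layer $j$ is labeled by a homogeneous linear form in $Y_j$. A set $\mathcal{H}$ is a hitting set for a class of polynomials if each polynomial in the class is zero iff it vanishes on all points of $\mathcal{H}$. Scalars $a\in\mathbb{F}$ act on matrices as $a\mathrm{I}$. *)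

theory Defs
  imports Main "HOL-Library.Poly_Mapping"
begin

datatype 'v ncword = NCWord (letters: "'v list")

instantiation ncword :: (type) monoid_add
begin
definition zero_ncword :: "'v ncword" where "zero_ncword = NCWord []"
definition plus_ncword :: "'v ncword \<Rightarrow> 'v ncword \<Rightarrow> 'v ncword" where
  "plus_ncword x y = NCWord (letters x @ letters y)"
instance
  by standard (auto simp: zero_ncword_def plus_ncword_def)
end

text \<open>Non-commutative polynomials F{x_v}: finitely supported coefficient functions
  on words; multiplication is the convolution product (concatenation of words).\<close>
type_synonym ('v, 'a) ncpoly = "'v ncword \<Rightarrow>\<^sub>0 'a"

definition ncvar :: "'v \<Rightarrow> ('v, 'a::ring_1) ncpoly" where
  "ncvar v = Poly_Mapping.single (NCWord [v]) 1"

definition ncconst :: "'a::ring_1 \<Rightarrow> ('v, 'a) ncpoly" where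
  "ncconst c = Poly_Mapping.single 0 c"

type_synonym ('v, 'a) cpoly = "('v \<Rightarrow>\<^sub>0 nat) \<Rightarrow>\<^sub>0 'a"

definition cvar :: "'v \<Rightarrow> ('v, 'a::comm_ring_1) cpoly" where
  "cvar v = Poly_Mapping.single (Poly_Mapping.single v 1) 1"

definition ceval :: "('v, 'a::comm_ring_1) cpoly \<Rightarrow> ('v \<Rightarrow> 'a) \<Rightarrow> 'a" where
  "ceval p h = (\<Sum>mon\<in>Poly_Mapping.keys p. Poly_Mapping.lookup p mon * (\<Prod>x\<in>Poly_Mapping.keys mon. h x ^ Poly_Mapping.lookup mon x))"

definition hitting_set :: "('v \<Rightarrow> 'a) set \<Rightarrow> ('v, 'a::comm_ring_1) cpoly set \<Rightarrow> bool" where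
  "hitting_set H C \<longleftrightarrow> (\<forall>g\<in>C. g = 0 \<longleftrightarrow> (\<forall>h\<in>H. ceval g h = 0))"

type_synonym 'a sqmat = "nat \<Rightarrow> nat \<Rightarrow> 'a"

definition mat_mult :: "nat \<Rightarrow> 'a::semiring_0 sqmat \<Rightarrow> 'a sqmat \<Rightarrow> 'a sqmat" where
  "mat_mult m A B = (\<lambda>i k. \<Sum>j<m. A i j * B j k)"

definition mat_id :: "'a::{zero,one} sqmat" where
  "mat_id = (\<lambda>i k. if i = k then 1 else 0)"

definition is_zero_mat :: "nat \<Rightarrow> 'a::zero sqmat \<Rightarrow> bool" where
  "is_zero_mat m M \<longleftrightarrow> (\<forall>i<m. \<forall>k<m. M i k = 0)"

definition word_mat :: "nat \<Rightarrow> ('v \<Rightarrow> 'a::semiring_1 sqmat) \<Rightarrow> 'v ncword \<Rightarrow> 'a sqmat" where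
  "word_mat m A w = foldr (\<lambda>v M. mat_mult m (A v) M) (letters w) mat_id"

definition nc_eval :: "nat \<Rightarrow> ('v \<Rightarrow> 'a::semiring_1 sqmat) \<Rightarrow> ('v, 'a) ncpoly \<Rightarrow> 'a sqmat" where
  "nc_eval m A f = (\<lambda>i k. \<Sum>w\<in>Poly_Mapping.keys f. Poly_Mapping.lookup f w * word_mat m A w i k)"

text \<open>An ABP of depth D: layer j has vertices 0..<wd j; the edge from vertex u of layer j-1
  to vertex v of layer j carries label lab j u v (label 0 = no edge).
  Paths are vertex sequences p!0, ..., p!D.\<close>
definition abp_paths :: "nat \<Rightarrow> (nat \<Rightarrow> nat) \<Rightarrow> nat list set" where
  "abp_paths D wd = {p. length p = Suc D \<and> (\<forall>j\<le>D. p ! j < wd j)}"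

definition abp_poly :: "nat \<Rightarrow> (nat \<Rightarrow> nat) \<Rightarrow> (nat \<Rightarrow> nat \<Rightarrow> nat \<Rightarrow> 'p::ring_1) \<Rightarrow> 'p" where
  "abp_poly D wd lab =
     (\<Sum>p\<in>abp_paths D wd. prod_list (map (\<lambda>j. lab j (p ! (j - 1)) (p ! j)) [1..<Suc D]))"

definition abp_shape :: "nat \<Rightarrow> nat \<Rightarrow> (nat \<Rightarrow> nat) \<Rightarrow> bool" where
  "abp_shape r D wd \<longleftrightarrow> wd 0 = 1 \<and> wd D = 1 \<and> (\<forall>j\<le>D. wd j \<le> r)"

definition affine_nc :: "nat \<Rightarrow> 'a \<times> (nat \<Rightarrow> 'a) \<Rightarrow> (nat, 'a::ring_1) ncpoly" where
  "affine_nc n ca = ncconst (fst ca) + (\<Sum>i<n. Poly_Mapping.single (NCWord [i]) (snd ca i))"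

definition nc_abp_computes :: "nat \<Rightarrow> nat \<Rightarrow> nat \<Rightarrow> (nat, 'a::ring_1) ncpoly \<Rightarrow> bool" where
  "nc_abp_computes n r D f \<longleftrightarrow>
     (\<exists>wd (L :: nat \<Rightarrow> nat \<Rightarrow> nat \<Rightarrow> 'a \<times> (nat \<Rightarrow> 'a)).
        abp_shape r D wd \<and> f = abp_poly D wd (\<lambda>j u v. affine_nc n (L j u v)))"

text \<open>Set-multilinear ABPs of width \<le> wmax and depth l w.r.t. the partition
  Y_j = {x_(i,j) : i < n}, j = 1..l: edges into layer j carry homogeneous linear forms
  sum_{i<n} a_i x_(i,j).\<close>
definition sml_abp_polys :: "nat \<Rightarrow> nat \<Rightarrow> nat \<Rightarrow> (nat \<times> nat, 'a::comm_ring_1) cpoly set" where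
  "sml_abp_polys n wmax l =
     {g. \<exists>wd (L :: nat \<Rightarrow> nat \<Rightarrow> nat \<Rightarrow> nat \<Rightarrow> 'a).
        abp_shape wmax l wd \<and>
        g = abp_poly l wd (\<lambda>j u v. \<Sum>i<n. Poly_Mapping.single (Poly_Mapping.single (i, j) 1) (L j u v i))}"

definition Xmat :: "nat \<Rightarrow> (nat \<times> nat \<Rightarrow> 'a::zero) \<Rightarrow> nat \<Rightarrow> 'a sqmat" where
  "Xmat D h i = (\<lambda>k l. if k \<le> D \<and> l \<le> D \<and> k + 1 = l then h (i, l) else 0)"

end

theory Submission
  imports Defs
begin

(* For a word w = w_1 ... w_k in the non-commuting variables let pos_monomial w be the
   commutative monomial x_(w_1,1) * ... * x_(w_k,k); the "positional image" pos_image k g of a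
   non-commutative polynomial g keeps its words of length k and maps each to its positional
   monomial.  This map is injective on words of a fixed length, so g = 0 as soon as all its
   positional images vanish.  The proof of the theorem has three ingredients:
   (1) Evaluation: the product of the matrices X_i along w is the weighted shift
       concentrated on the entries (a, a + |w|), hence entry (0,k) of g(X(h)) is the value of
       pos_image k g at h.
   (2) Homogenization: if g is computed by an ABP of width r and depth D, then pos_image k g
       is 0 for k > D and, for every k >= 1, is computed by a set-multilinear ABP of depth k
       and width r(D+1).  Layer j of that ABP has a vertex for each vertex (s,u) of the
       original ABP, meaning "the j-th variable was read on the edge entering u in layer s";
       its edges are the linear parts of the original edges, preceded by paths of constant
       parts. *)

section \<open>Layer-by-layer evaluation of ABPs\<close>

primrec abp_forward :: "(nat \<Rightarrow> nat) \<Rightarrow> (nat \<Rightarrow> nat \<Rightarrow> nat \<Rightarrow> 'p::ring_1) \<Rightarrow> nat \<Rightarrow> nat \<Rightarrow> 'p" where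
  "abp_forward wd lab 0 v = (if v = 0 then 1 else 0)"
| "abp_forward wd lab (Suc j) v = (\<Sum>u<wd j. abp_forward wd lab j u * lab (Suc j) u v)"

lemma abp_paths_0: "abp_paths 0 wd = (\<lambda>v. [v]) ` {..<wd 0}"
  by (auto simp: abp_paths_def length_Suc_conv)

lemma abp_paths_Suc:
  "abp_paths (Suc j) wd = (\<lambda>(q, v). q @ [v]) ` (abp_paths j wd \<times> {..<wd (Suc j)})"
proof (intro set_eqI iffI)
  fix p assume p: "p \<in> abp_paths (Suc j) wd"
  then have len: "length p = Suc (Suc j)" by (simp add: abp_paths_def)
  then have "p = butlast p @ [p ! Suc j]"
    by (metis append_butlast_last_id diff_Suc_1 last_conv_nth list.size(3) nat.distinct(1))
  moreover have "butlast p \<in> abp_paths j wd" "p ! Suc j < wd (Suc j)"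
    using p len by (auto simp: abp_paths_def nth_butlast)
  ultimately show "p \<in> (\<lambda>(q, v). q @ [v]) ` (abp_paths j wd \<times> {..<wd (Suc j)})"
    by (metis (no_types, lifting) SigmaI case_prod_conv image_eqI lessThan_iff)
next
  fix p assume "p \<in> (\<lambda>(q, v). q @ [v]) ` (abp_paths j wd \<times> {..<wd (Suc j)})"
  then obtain q v where "p = q @ [v]" "q \<in> abp_paths j wd" "v < wd (Suc j)" by auto
  then show "p \<in> abp_paths (Suc j) wd"
    by (auto simp: abp_paths_def nth_append le_Suc_eq)
qed

definition path_weight :: "(nat \<Rightarrow> nat \<Rightarrow> nat \<Rightarrow> 'p::ring_1) \<Rightarrow> nat \<Rightarrow> nat list \<Rightarrow> 'p" where
  "path_weight lab j p = prod_list (map (\<lambda>i. lab i (p ! (i - 1)) (p ! i)) [1..<Suc j])"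

lemma path_weight_snoc:
  assumes "length q = Suc j"
  shows "path_weight lab (Suc j) (q @ [v]) = path_weight lab j q * lab (Suc j) (q ! j) v"
proof -
  have prefix: "map (\<lambda>i. lab i ((q @ [v]) ! (i - 1)) ((q @ [v]) ! i)) [1..<Suc j]
      = map (\<lambda>i. lab i (q ! (i - 1)) (q ! i)) [1..<Suc j]"
    using assms by (auto simp: nth_append)
  have "[1..<Suc (Suc j)] = [1..<Suc j] @ [Suc j]" by simp
  then show ?thesis
    unfolding path_weight_def using assms by (simp only: map_append prod_list.append prefix) (simp add: nth_append)
qed

lemma abp_path_sum:
  assumes "wd 0 = 1"
  shows "(\<Sum>p\<in>abp_paths j wd. path_weight lab j p * g (p ! j)) = (\<Sum>v<wd j. abp_forward wd lab j v * g v)"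
proof (induction j arbitrary: g)
  case 0
  have "(\<Sum>p\<in>(\<lambda>a. [a]) ` {..<Suc 0}. g (p ! 0)) = g 0" by (simp add: lessThan_Suc)
  then show ?case using assms by (simp add: abp_paths_0 path_weight_def)
next
  case (Suc j)
  have inj: "inj_on (\<lambda>(q, v). q @ [v]) (abp_paths j wd \<times> {..<wd (Suc j)})"
    by (auto simp: inj_on_def)
  have len: "length q = Suc j" if "q \<in> abp_paths j wd" for q
    using that by (simp add: abp_paths_def)
  have "(\<Sum>p\<in>abp_paths (Suc j) wd. path_weight lab (Suc j) p * g (p ! Suc j))
      = (\<Sum>(q, v)\<in>abp_paths j wd \<times> {..<wd (Suc j)}. path_weight lab j q * (lab (Suc j) (q ! j) v * g v))"
    unfolding abp_paths_Suc sum.reindex[OF inj]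
    by (intro sum.cong refl) (auto simp: len path_weight_snoc nth_append mult.assoc)
  also have "\<dots> = (\<Sum>q\<in>abp_paths j wd. path_weight lab j q * (\<Sum>v<wd (Suc j). lab (Suc j) (q ! j) v * g v))"
    by (simp add: sum.cartesian_product[symmetric] sum_distrib_left)
  also have "\<dots> = (\<Sum>u<wd j. abp_forward wd lab j u * (\<Sum>v<wd (Suc j). lab (Suc j) u v * g v))"
    by (rule Suc.IH)
  also have "\<dots> = (\<Sum>v<wd (Suc j). abp_forward wd lab (Suc j) v * g v)"
    by (simp add: sum_distrib_left sum_distrib_right mult.assoc sum.swap[of _ "{..<wd j}"])
  finally show ?case .
qed

lemma abp_poly_forward:
  assumes "wd 0 = 1" "wd D = 1"
  shows "abp_poly D wd lab = abp_forward wd lab D 0"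
  using abp_path_sum[where g = "\<lambda>_. 1" and j = D and lab = lab and wd = wd, OF assms(1)] assms(2)
  by (simp add: abp_poly_def path_weight_def)

section \<open>Positional images of non-commutative polynomials\<close>

lemma letters_plus [simp]: "letters (w + w') = letters w @ letters w'"
  by (simp add: plus_ncword_def)

lemma letters_zero [simp]: "letters 0 = []"
  by (simp add: zero_ncword_def)

lemma letters_eq_Nil_iff: "letters w = [] \<longleftrightarrow> w = 0"
  by (cases w) (simp add: zero_ncword_def)

definition pos_monomial :: "nat ncword \<Rightarrow> (nat \<times> nat) \<Rightarrow>\<^sub>0 nat" where
  "pos_monomial w = (\<Sum>t<length (letters w). Poly_Mapping.single (letters w ! t, Suc t) 1)"

definition pos_term :: "nat \<Rightarrow> nat ncword \<Rightarrow> 'a::comm_ring_1 \<Rightarrow> (nat \<times> nat, 'a) cpoly" where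
  "pos_term k w c = (if length (letters w) = k then Poly_Mapping.single (pos_monomial w) c else 0)"

definition pos_image :: "nat \<Rightarrow> (nat, 'a::comm_ring_1) ncpoly \<Rightarrow> (nat \<times> nat, 'a) cpoly" where
  "pos_image k g = (\<Sum>w\<in>Poly_Mapping.keys g. pos_term k w (Poly_Mapping.lookup g w))"

definition lin_form :: "nat \<Rightarrow> nat \<Rightarrow> (nat \<Rightarrow> 'a::comm_ring_1) \<Rightarrow> (nat \<times> nat, 'a) cpoly" where
  "lin_form n j a = (\<Sum>i<n. Poly_Mapping.single (Poly_Mapping.single (i, j) 1) (a i))"

lemma lookup_pos_monomial:
  "Poly_Mapping.lookup (pos_monomial w) (i, s) =
     (if 0 < s \<and> s \<le> length (letters w) \<and> letters w ! (s - 1) = i then 1 else 0)"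
proof -
  define c :: nat where "c = (if 0 < s \<and> letters w ! (s - 1) = i then 1 else 0)"
  have single_at: "Poly_Mapping.lookup (Poly_Mapping.single (a, Suc t) (1::nat)) (i, s) =
      (if t = s - 1 \<and> 0 < s \<and> a = i then 1 else 0)" for a t
    by (simp add: lookup_single when_def) linarith
  have "Poly_Mapping.lookup (pos_monomial w) (i, s) = (\<Sum>t<length (letters w). if t = s - 1 then c else 0)"
    unfolding pos_monomial_def lookup_sum single_at c_def by (intro sum.cong refl) auto
  also have "\<dots> = (if s - 1 < length (letters w) then c else 0)"
    by (simp add: sum.delta)
  also have "\<dots> = (if 0 < s \<and> s \<le> length (letters w) \<and> letters w ! (s - 1) = i then 1 else 0)"
    unfolding c_def by (cases s) simp_all
  finally show ?thesis .
qed

lemma pos_monomial_inj: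
  assumes "length (letters w) = length (letters w')" "pos_monomial w = pos_monomial w'"
  shows "w = w'"
proof -
  have "letters w = letters w'"
  proof (rule nth_equalityI)
    fix t assume t: "t < length (letters w)"
    have "Poly_Mapping.lookup (pos_monomial w') (letters w ! t, Suc t) = 1"
      using t assms(2)[symmetric] by (simp add: lookup_pos_monomial)
    then show "letters w ! t = letters w' ! t"
      by (simp add: lookup_pos_monomial split: if_splits)
  qed (use assms in auto)
  then show ?thesis by (cases w, cases w') auto
qed

lemma lookup_pos_image:
  assumes "length (letters w) = k"
  shows "Poly_Mapping.lookup (pos_image k g) (pos_monomial w) = Poly_Mapping.lookup g w"
proof -
  have "Poly_Mapping.lookup (pos_image k g) (pos_monomial w) =
      (\<Sum>w'\<in>Poly_Mapping.keys g. if w' = w then Poly_Mapping.lookup g w' else 0)"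
    unfolding pos_image_def lookup_sum using assms pos_monomial_inj
    by (intro sum.cong) (auto simp: pos_term_def lookup_single when_def)
  also have "\<dots> = Poly_Mapping.lookup g w" by (simp add: sum.delta' in_keys_iff)
  finally show ?thesis .
qed

lemma pos_images_zero_imp_zero:
  assumes "\<And>k. pos_image k g = 0"
  shows "g = 0"
proof (rule poly_mapping_eqI)
  fix w
  show "Poly_Mapping.lookup g w = Poly_Mapping.lookup 0 w"
    using lookup_pos_image[of w "length (letters w)" g] assms by simp
qed

lemma pos_image_0: "pos_image 0 g = Poly_Mapping.single 0 (Poly_Mapping.lookup g 0)"
proof -
  have "pos_image 0 g = (\<Sum>w\<in>Poly_Mapping.keys g. if w = 0 then Poly_Mapping.single 0 (Poly_Mapping.lookup g w) else 0)"
    unfolding pos_image_def pos_term_def by (intro sum.cong refl) (auto simp: pos_monomial_def letters_eq_Nil_iff)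
  also have "\<dots> = Poly_Mapping.single 0 (Poly_Mapping.lookup g 0)"
    by (simp add: sum.delta' in_keys_iff)
  finally show ?thesis .
qed

lemma pos_image_superset:
  assumes "finite S" "Poly_Mapping.keys g \<subseteq> S"
  shows "pos_image k g = (\<Sum>w\<in>S. pos_term k w (Poly_Mapping.lookup g w))"
  unfolding pos_image_def using assms
  by (intro sum.mono_neutral_left) (auto simp: in_keys_iff pos_term_def)

lemma pos_term_add: "pos_term k w (a + b) = pos_term k w a + pos_term k w b"
  by (simp add: pos_term_def single_add)

lemma pos_image_add: "pos_image k (g + g') = pos_image k g + pos_image k g'"
proof -
  let ?S = "Poly_Mapping.keys g \<union> Poly_Mapping.keys g'"
  have "pos_image k (g + g') = (\<Sum>w\<in>?S. pos_term k w (Poly_Mapping.lookup (g + g') w))"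
    by (rule pos_image_superset) (auto simp: keys_add)
  also have "\<dots> = (\<Sum>w\<in>?S. pos_term k w (Poly_Mapping.lookup g w)) + (\<Sum>w\<in>?S. pos_term k w (Poly_Mapping.lookup g' w))"
    by (simp add: lookup_add pos_term_add sum.distrib)
  also have "\<dots> = pos_image k g + pos_image k g'"
    by (subst (1 2) pos_image_superset[of ?S]) auto
  finally show ?thesis .
qed

lemma pos_image_zero [simp]: "pos_image k 0 = 0"
  by (simp add: pos_image_def)

lemma pos_image_sum: "finite A \<Longrightarrow> pos_image k (\<Sum>x\<in>A. g x) = (\<Sum>x\<in>A. pos_image k (g x))"
  by (induction A rule: finite_induct) (auto simp: pos_image_add)

lemma pos_image_single: "pos_image k (Poly_Mapping.single w c) = pos_term k w c"
  by (cases "c = 0") (auto simp: pos_image_def pos_term_def)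

lemma poly_mapping_expansion:
  "g = (\<Sum>w\<in>Poly_Mapping.keys g. Poly_Mapping.single w (Poly_Mapping.lookup g w))"
proof (rule poly_mapping_eqI)
  fix k
  have "(\<Sum>w\<in>Poly_Mapping.keys g. Poly_Mapping.lookup (Poly_Mapping.single w (Poly_Mapping.lookup g w)) k)
      = (\<Sum>w\<in>Poly_Mapping.keys g. if w = k then Poly_Mapping.lookup g w else 0)"
    by (intro sum.cong) (auto simp: lookup_single when_def)
  then show "Poly_Mapping.lookup g k = Poly_Mapping.lookup (\<Sum>w\<in>Poly_Mapping.keys g. Poly_Mapping.single w (Poly_Mapping.lookup g w)) k"
    by (simp add: lookup_sum sum.delta' in_keys_iff)
qed

text \<open>Multiplying by an affine form on the right: the constant part keeps the degree, the
  variable x_i appended at position k becomes x_(i,k).\<close>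
lemma pos_image_mult_single:
  "pos_image k (g * Poly_Mapping.single w' a) =
     (\<Sum>w\<in>Poly_Mapping.keys g. pos_term k (w + w') (Poly_Mapping.lookup g w * a))"
proof -
  have "g * Poly_Mapping.single w' a = (\<Sum>w\<in>Poly_Mapping.keys g. Poly_Mapping.single (w + w') (Poly_Mapping.lookup g w * a))"
    by (subst poly_mapping_expansion[of g]) (simp add: sum_distrib_right mult_single)
  then show ?thesis by (simp add: pos_image_sum pos_image_single)
qed

lemma pos_monomial_snoc:
  "pos_monomial (w + NCWord [i]) = pos_monomial w + Poly_Mapping.single (i, Suc (length (letters w))) 1"
proof -
  have "pos_monomial (w + NCWord [i])
      = (\<Sum>t<length (letters w). Poly_Mapping.single ((letters w @ [i]) ! t, Suc t) 1)
        + Poly_Mapping.single (i, Suc (length (letters w))) 1"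
    by (simp add: pos_monomial_def sum.lessThan_Suc)
  also have "(\<Sum>t<length (letters w). Poly_Mapping.single ((letters w @ [i]) ! t, Suc t) 1) = pos_monomial w"
    unfolding pos_monomial_def by (intro sum.cong) (auto simp: nth_append)
  finally show ?thesis .
qed

lemma pos_image_mult_const: "pos_image k (g * ncconst a) = pos_image k g * Poly_Mapping.single 0 a"
  unfolding ncconst_def pos_image_mult_single
  by (auto simp: pos_image_def sum_distrib_right pos_term_def mult_single intro!: sum.cong)

lemma pos_image_mult_var:
  "pos_image k (g * Poly_Mapping.single (NCWord [i]) a) =
     (if k = 0 then 0 else pos_image (k - 1) g * Poly_Mapping.single (Poly_Mapping.single (i, k) 1) a)"
proof -
  have "pos_term k (w + NCWord [i]) (c * a) =
     (if k = 0 then 0 else pos_term (k - 1) w c * Poly_Mapping.single (Poly_Mapping.single (i, k) 1) a)" for w c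
    by (auto simp: pos_term_def mult_single pos_monomial_snoc)
  then show ?thesis
    unfolding pos_image_mult_single by (simp add: pos_image_def sum_distrib_right)
qed

lemma pos_image_mult_affine:
  "pos_image k (g * affine_nc n ca) = pos_image k g * Poly_Mapping.single 0 (fst ca)
      + (if k = 0 then 0 else pos_image (k - 1) g * lin_form n k (snd ca))"
  unfolding affine_nc_def
  by (simp add: distrib_left sum_distrib_left pos_image_add pos_image_sum pos_image_mult_const
      pos_image_mult_var lin_form_def)

lemma pos_image_one: "pos_image k (1::(nat, 'a::comm_ring_1) ncpoly) = (if k = 0 then 1 else 0)"
proof -
  have "pos_image k (1::(nat, 'a) ncpoly) = pos_term k 0 (1::'a)"
    by (metis pos_image_single single_one)
  then show ?thesis by (simp add: pos_term_def pos_monomial_def)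
qed

section \<open>Evaluating at the shift matrices\<close>

definition mon_eval :: "('v \<Rightarrow>\<^sub>0 nat) \<Rightarrow> ('v \<Rightarrow> 'a::comm_ring_1) \<Rightarrow> 'a" where
  "mon_eval m h = (\<Prod>x\<in>Poly_Mapping.keys m. h x ^ Poly_Mapping.lookup m x)"

lemma ceval_superset:
  assumes "finite S" "Poly_Mapping.keys p \<subseteq> S"
  shows "ceval p h = (\<Sum>m\<in>S. Poly_Mapping.lookup p m * mon_eval m h)"
  unfolding ceval_def mon_eval_def[symmetric] using assms
  by (intro sum.mono_neutral_left) (auto simp: in_keys_iff)

lemma ceval_add: "ceval (p + q) h = ceval p h + ceval q h"
proof -
  let ?S = "Poly_Mapping.keys p \<union> Poly_Mapping.keys q"
  have "ceval (p + q) h = (\<Sum>m\<in>?S. Poly_Mapping.lookup (p + q) m * mon_eval m h)"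
    by (rule ceval_superset) (auto simp: keys_add)
  also have "\<dots> = (\<Sum>m\<in>?S. Poly_Mapping.lookup p m * mon_eval m h) + (\<Sum>m\<in>?S. Poly_Mapping.lookup q m * mon_eval m h)"
    by (simp add: lookup_add distrib_right sum.distrib)
  also have "\<dots> = ceval p h + ceval q h"
    by (subst (1 2) ceval_superset[of ?S]) auto
  finally show ?thesis .
qed

lemma ceval_zero [simp]: "ceval 0 h = 0"
  by (simp add: ceval_def)

lemma ceval_sum: "finite A \<Longrightarrow> ceval (\<Sum>x\<in>A. g x) h = (\<Sum>x\<in>A. ceval (g x) h)"
  by (induction A rule: finite_induct) (auto simp: ceval_add)

lemma ceval_single: "ceval (Poly_Mapping.single m c) h = c * mon_eval m h"
  by (cases "c = 0") (auto simp: ceval_def mon_eval_def)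

lemma ceval_pos_image_0: "ceval (pos_image 0 g) h = Poly_Mapping.lookup g 0"
  by (simp add: pos_image_0 ceval_single mon_eval_def)

lemma mon_eval_pos_monomial:
  "mon_eval (pos_monomial w) h = (\<Prod>t<length (letters w). h (letters w ! t, Suc t))"
proof -
  have keys: "Poly_Mapping.keys (pos_monomial w) = (\<lambda>t. (letters w ! t, Suc t)) ` {..<length (letters w)}"
    by (force simp: in_keys_iff lookup_pos_monomial split: if_splits
        intro: image_eqI[where x = "snd x - 1" for x])
  have "inj_on (\<lambda>t. (letters w ! t, Suc t)) {..<length (letters w)}"
    by (auto simp: inj_on_def)
  then show ?thesis unfolding mon_eval_def keys
    by (subst prod.reindex) (auto simp: lookup_pos_monomial intro!: prod.cong)
qed

lemma ceval_pos_image: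
  "ceval (pos_image k g) h = (\<Sum>w\<in>Poly_Mapping.keys g.
     if length (letters w) = k then Poly_Mapping.lookup g w * (\<Prod>t<k. h (letters w ! t, Suc t)) else 0)"
  unfolding pos_image_def
  by (auto simp: ceval_sum pos_term_def ceval_single mon_eval_pos_monomial intro!: sum.cong)

lemma word_mat_Xmat:
  assumes "a \<le> D"
  shows "word_mat (D + 1) (Xmat D h) (NCWord ws) a b =
    (if b = a + length ws \<and> b \<le> D then (\<Prod>t<length ws. h (ws ! t, a + Suc t)) else 0)"
  using assms
proof (induction ws arbitrary: a)
  case Nil
  then show ?case by (simp add: word_mat_def mat_id_def)
next
  case (Cons v ws)
  define M where "M = word_mat (D + 1) (Xmat D h) (NCWord ws)"
  have "word_mat (D + 1) (Xmat D h) (NCWord (v # ws)) a b = (\<Sum>j<D + 1. Xmat D h v a j * M j b)"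
    by (simp add: word_mat_def M_def mat_mult_def)
  also have "\<dots> = (\<Sum>j<D + 1. if j = a + 1 then (if a + 1 \<le> D then h (v, a + 1) * M (a + 1) b else 0) else 0)"
    using Cons.prems by (intro sum.cong) (auto simp: Xmat_def)
  also have "\<dots> = (if a + 1 \<le> D then h (v, a + 1) * M (a + 1) b else 0)"
    by (simp add: sum.delta)
  also have "\<dots> = (if b = a + length (v # ws) \<and> b \<le> D then (\<Prod>t<length (v # ws). h ((v # ws) ! t, a + Suc t)) else 0)"
    using Cons.IH[of "a + 1"] unfolding M_def
    by (auto simp del: prod.lessThan_Suc simp add: prod.lessThan_Suc_shift algebra_simps)
  finally show ?case .
qed

lemma nc_eval_Xmat_entry:
  assumes "k \<le> D"
  shows "nc_eval (D + 1) (Xmat D h) g 0 k = ceval (pos_image k g) h"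
  unfolding nc_eval_def ceval_pos_image
proof (intro sum.cong refl)
  fix w :: "nat ncword"
  have "word_mat (D + 1) (Xmat D h) w 0 k = (if length (letters w) = k then (\<Prod>t<k. h (letters w ! t, Suc t)) else 0)"
    using word_mat_Xmat[of 0 D h "letters w" k] assms by simp
  then show "Poly_Mapping.lookup g w * word_mat (D + 1) (Xmat D h) w 0 k =
     (if length (letters w) = k then Poly_Mapping.lookup g w * (\<Prod>t<k. h (letters w ! t, Suc t)) else 0)"
    by simp
qed

section \<open>Homogeneous parts of an ABP via the last variable-reading edge\<close>

lemma single_sum: "Poly_Mapping.single k (\<Sum>w\<in>W. f w) = (\<Sum>w\<in>W. Poly_Mapping.single k (f w))"
  by (induction W rule: infinite_finite_induct) (simp_all add: single_add)

lemma single_zero_mult: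
  "Poly_Mapping.single (0::'k::monoid_add) (a * b) = Poly_Mapping.single 0 a * Poly_Mapping.single 0 b"
  by (simp add: mult_single)

lemma lin_form_zero [simp]: "lin_form n j (\<lambda>i. 0) = 0"
  by (simp add: lin_form_def)

lemma const_mult_lin_form: "Poly_Mapping.single 0 c * lin_form n j a = lin_form n j (\<lambda>i. c * a i)"
  by (simp add: lin_form_def sum_distrib_left mult_single)

lemma sum_lin_form: "(\<Sum>w\<in>W. lin_form n j (a w)) = lin_form n j (\<lambda>i. \<Sum>w\<in>W. a w i)"
  by (induction W rule: infinite_finite_induct) (simp_all add: lin_form_def sum.distrib single_add)

lemma sum_swap_nested:
  "(\<Sum>a\<in>A. \<Sum>b\<in>B a. \<Sum>c\<in>C. \<Sum>d\<in>E c. T a b c d) = (\<Sum>c\<in>C. \<Sum>d\<in>E c. \<Sum>a\<in>A. \<Sum>b\<in>B a. T a b c d)"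
proof -
  have "(\<Sum>a\<in>A. \<Sum>b\<in>B a. \<Sum>c\<in>C. \<Sum>d\<in>E c. T a b c d) = (\<Sum>a\<in>A. \<Sum>c\<in>C. \<Sum>b\<in>B a. \<Sum>d\<in>E c. T a b c d)"
    by (intro sum.cong refl sum.swap)
  also have "\<dots> = (\<Sum>c\<in>C. \<Sum>a\<in>A. \<Sum>d\<in>E c. \<Sum>b\<in>B a. T a b c d)"
    by (subst sum.swap) (intro sum.cong refl sum.swap)
  also have "\<dots> = (\<Sum>c\<in>C. \<Sum>d\<in>E c. \<Sum>a\<in>A. \<Sum>b\<in>B a. T a b c d)"
    by (intro sum.cong refl sum.swap)
  finally show ?thesis .
qed

locale affine_abp =
  fixes n D :: nat and wd :: "nat \<Rightarrow> nat" and L :: "nat \<Rightarrow> nat \<Rightarrow> nat \<Rightarrow> 'a::comm_ring_1 \<times> (nat \<Rightarrow> 'a)"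
  assumes wd_source: "wd 0 = 1" and wd_sink: "wd D = 1"
begin

definition const_lab :: "nat \<Rightarrow> nat \<Rightarrow> nat \<Rightarrow> 'a" where
  "const_lab t u v = fst (L t u v)"

definition lin_lab :: "nat \<Rightarrow> nat \<Rightarrow> nat \<Rightarrow> nat \<Rightarrow> 'a" where
  "lin_lab t u v = snd (L t u v)"

definition node_poly :: "nat \<Rightarrow> nat \<Rightarrow> (nat, 'a) ncpoly" where
  "node_poly = abp_forward wd (\<lambda>j u v. affine_nc n (L j u v))"

definition node_part :: "nat \<Rightarrow> nat \<Rightarrow> nat \<Rightarrow> (nat \<times> nat, 'a) cpoly" where
  "node_part t v k = pos_image k (node_poly t v)"

lemma abp_poly_node_poly: "abp_poly D wd (\<lambda>j u v. affine_nc n (L j u v)) = node_poly D 0"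
  unfolding node_poly_def by (rule abp_poly_forward[OF wd_source wd_sink])

lemma node_part_0: "node_part 0 v k = (if k = 0 \<and> v = 0 then 1 else 0)"
  by (simp add: node_part_def node_poly_def pos_image_one)

lemma node_part_Suc:
  "node_part (Suc t) v k = (\<Sum>u<wd t. node_part t u k * Poly_Mapping.single 0 (const_lab (Suc t) u v)
    + (if k = 0 then 0 else node_part t u (k - 1) * lin_form n k (lin_lab (Suc t) u v)))"
  unfolding node_part_def node_poly_def const_lab_def lin_lab_def
  by (simp add: pos_image_sum pos_image_mult_affine)

text \<open>A path to layer t reads at most t variables.\<close>
lemma node_part_high_degree: "t < k \<Longrightarrow> node_part t v k = 0"
  by (induction t arbitrary: v k) (simp_all add: node_part_0 node_part_Suc)

primrec const_paths :: "nat \<Rightarrow> nat \<Rightarrow> nat \<Rightarrow> nat \<Rightarrow> 'a" where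
  "const_paths s 0 u v = (if u = v then 1 else 0)"
| "const_paths s (Suc d) u v = (\<Sum>w<wd (s + d). const_paths s d u w * const_lab (Suc (s + d)) w v)"

text \<open>entry_part k s u: the degree-k contributions of paths to vertex u of layer s whose k-th
  variable is read on the last edge (for k = 0: the source itself).\<close>
fun entry_part :: "nat \<Rightarrow> nat \<Rightarrow> nat \<Rightarrow> (nat \<times> nat, 'a) cpoly" where
  "entry_part 0 s u = (if s = 0 \<and> u = 0 then 1 else 0)"
| "entry_part (Suc k) s u = (if s = 0 then 0
     else (\<Sum>w<wd (s - 1). node_part (s - 1) w k * lin_form n (Suc k) (lin_lab s w u)))"

lemma extend_const_paths:
  assumes IH: "\<And>u. u < wd t \<Longrightarrow>
    node_part t u k = (\<Sum>s\<le>t. \<Sum>u'<wd s. entry_part k s u' * Poly_Mapping.single 0 (const_paths s (t - s) u' u))"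
  shows "(\<Sum>u<wd t. node_part t u k * Poly_Mapping.single 0 (const_lab (Suc t) u v))
      = (\<Sum>s\<le>t. \<Sum>u'<wd s. entry_part k s u' * Poly_Mapping.single 0 (const_paths s (Suc t - s) u' v))"
proof -
  have "(\<Sum>u<wd t. node_part t u k * Poly_Mapping.single 0 (const_lab (Suc t) u v))
     = (\<Sum>s\<le>t. \<Sum>u'<wd s. entry_part k s u' *
         (\<Sum>u<wd t. Poly_Mapping.single 0 (const_paths s (t - s) u' u) * Poly_Mapping.single 0 (const_lab (Suc t) u v)))"
    by (simp add: IH sum_distrib_right sum_distrib_left mult.assoc sum.swap[of _ "{..<wd t}"])
  also have "\<dots> = (\<Sum>s\<le>t. \<Sum>u'<wd s. entry_part k s u' * Poly_Mapping.single 0 (const_paths s (Suc t - s) u' v))"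
  proof (intro sum.cong refl)
    fix s u' assume "s \<in> {..t}"
    then have "Suc t - s = Suc (t - s)" "s + (t - s) = t" by auto
    then show "entry_part k s u' * (\<Sum>u<wd t. Poly_Mapping.single 0 (const_paths s (t - s) u' u) * Poly_Mapping.single 0 (const_lab (Suc t) u v))
       = entry_part k s u' * Poly_Mapping.single 0 (const_paths s (Suc t - s) u' v)"
      by (simp only: const_paths.simps single_sum single_zero_mult)
  qed
  finally show ?thesis .
qed

text \<open>Decomposition of a homogeneous part according to the layer s and vertex u where the
  last variable was read: afterwards only constant parts are used.\<close>
lemma node_part_decomp:
  "v < wd t \<Longrightarrow> node_part t v k =
     (\<Sum>s\<le>t. \<Sum>u<wd s. entry_part k s u * Poly_Mapping.single 0 (const_paths s (t - s) u v))"
proof (induction t arbitrary: v)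
  case 0
  then show ?case using wd_source by (cases k) (auto simp: node_part_0)
next
  case (Suc t)
  have lin_edges: "(\<Sum>u<wd t. (if k = 0 then 0 else node_part t u (k - 1) * lin_form n k (lin_lab (Suc t) u v)))
      = entry_part k (Suc t) v"
    by (cases k) auto
  have new_layer: "(\<Sum>u<wd (Suc t). entry_part k (Suc t) u * Poly_Mapping.single 0 (const_paths (Suc t) 0 u v))
      = entry_part k (Suc t) v"
    using Suc.prems by (simp add: if_distrib[of "\<lambda>c. _ * Poly_Mapping.single 0 c"] sum.delta' cong: if_cong)
  show ?case
    unfolding node_part_Suc sum.distrib lin_edges sum.atMost_Suc
    by (simp only: new_layer diff_self_eq_0 extend_const_paths[OF Suc.IH])
qed

text \<open>The linear form on the compressed edge from vertex u of layer s (the last variable read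
  so far) to vertex v of a later layer s' (the next variable read): constant parts up to
  layer s' - 1, then the linear part of an edge into v.\<close>
definition jump_form :: "nat \<Rightarrow> nat \<Rightarrow> nat \<Rightarrow> nat \<Rightarrow> nat \<Rightarrow> 'a" where
  "jump_form s u s' v = (\<lambda>i. if s < s'
     then (\<Sum>w<wd (s' - 1). const_paths s (s' - 1 - s) u w * lin_lab s' w v i) else 0)"

lemma entry_part_Suc:
  assumes "s' \<le> D"
  shows "entry_part (Suc k) s' v = (\<Sum>s\<le>D. \<Sum>u<wd s. entry_part k s u * lin_form n (Suc k) (jump_form s u s' v))"
proof (cases s')
  case 0
  then show ?thesis by (simp add: jump_form_def)
next
  case (Suc t)
  have "entry_part (Suc k) s' v = (\<Sum>w<wd t. node_part t w k * lin_form n (Suc k) (lin_lab s' w v))"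
    using Suc by simp
  also have "\<dots> = (\<Sum>w<wd t. (\<Sum>s\<le>t. \<Sum>u<wd s. entry_part k s u * Poly_Mapping.single 0 (const_paths s (t - s) u w))
      * lin_form n (Suc k) (lin_lab s' w v))"
    by (intro sum.cong refl) (simp add: node_part_decomp)
  also have "\<dots> = (\<Sum>s\<le>t. \<Sum>u<wd s. entry_part k s u *
      (\<Sum>w<wd t. Poly_Mapping.single 0 (const_paths s (t - s) u w) * lin_form n (Suc k) (lin_lab s' w v)))"
    by (simp add: sum_distrib_right sum_distrib_left mult.assoc sum.swap[of _ "{..<wd t}"])
  also have "\<dots> = (\<Sum>s\<le>t. \<Sum>u<wd s. entry_part k s u * lin_form n (Suc k) (jump_form s u s' v))"
    by (intro sum.cong refl) (simp add: const_mult_lin_form sum_lin_form jump_form_def Suc)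
  also have "\<dots> = (\<Sum>s\<le>D. \<Sum>u<wd s. entry_part k s u * lin_form n (Suc k) (jump_form s u s' v))"
    using assms Suc by (intro sum.mono_neutral_left) (auto simp: jump_form_def)
  finally show ?thesis .
qed

text \<open>The linear form on the compressed edge from vertex u of layer s to the sink: the
  next (and last) variable is read somewhere after layer s, followed by constant parts.\<close>
definition exit_form :: "nat \<Rightarrow> nat \<Rightarrow> nat \<Rightarrow> 'a" where
  "exit_form s u = (\<lambda>i. \<Sum>s'\<le>D. \<Sum>v<wd s'. jump_form s u s' v i * const_paths s' (D - s') v 0)"

lemma node_part_sink:
  "node_part D 0 (Suc k) = (\<Sum>s\<le>D. \<Sum>u<wd s. entry_part k s u * lin_form n (Suc k) (exit_form s u))"
proof -
  have exit: "(\<Sum>s'\<le>D. \<Sum>v<wd s'. lin_form n (Suc k) (jump_form s u s' v) * Poly_Mapping.single 0 (const_paths s' (D - s') v 0))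
      = lin_form n (Suc k) (exit_form s u)" for s u
    by (simp add: mult.commute[of "lin_form _ _ _"] const_mult_lin_form sum_lin_form exit_form_def)
      (simp add: mult.commute)
  have "node_part D 0 (Suc k) = (\<Sum>s'\<le>D. \<Sum>v<wd s'. entry_part (Suc k) s' v * Poly_Mapping.single 0 (const_paths s' (D - s') v 0))"
    using wd_sink by (simp add: node_part_decomp)
  also have "\<dots> = (\<Sum>s'\<le>D. \<Sum>v<wd s'. \<Sum>s\<le>D. \<Sum>u<wd s.
      entry_part k s u * (lin_form n (Suc k) (jump_form s u s' v) * Poly_Mapping.single 0 (const_paths s' (D - s') v 0)))"
    by (intro sum.cong refl) (simp del: entry_part.simps add: entry_part_Suc sum_distrib_right mult.assoc)
  also have "\<dots> = (\<Sum>s\<le>D. \<Sum>u<wd s. \<Sum>s'\<le>D. \<Sum>v<wd s'.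
      entry_part k s u * (lin_form n (Suc k) (jump_form s u s' v) * Poly_Mapping.single 0 (const_paths s' (D - s') v 0)))"
    by (rule sum_swap_nested)
  also have "\<dots> = (\<Sum>s\<le>D. \<Sum>u<wd s. entry_part k s u * lin_form n (Suc k) (exit_form s u))"
    by (simp only: sum_distrib_left[symmetric] exit)
  finally show ?thesis .
qed

end

section \<open>A set-multilinear ABP for each homogeneous part\<close>

lemma sum_div_mod:
  fixes g :: "nat \<Rightarrow> 'b::comm_monoid_add"
  shows "(\<Sum>e<m * r. g e) = (\<Sum>s<m. \<Sum>u<r. g (s * r + u))"
proof -
  have "(\<Sum>e<m * r. g e) = (\<Sum>s<m. sum g {s * r..<s * r + r})"
    using sum.nat_group[of g r m] by simp
  also have "\<dots> = (\<Sum>s<m. \<Sum>u<r. g (s * r + u))"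
  proof (rule sum.cong[OF refl])
    fix s
    have "sum g {0 + s * r..<r + s * r} = sum (g \<circ> plus (s * r)) {0..<r}"
      by (rule sum.atLeastLessThan_shift_bounds)
    then show "sum g {s * r..<s * r + r} = (\<Sum>u<r. g (s * r + u))"
      by (simp add: atLeast0LessThan comp_def add.commute)
  qed
  finally show ?thesis .
qed

text \<open>From now on the layers have width at most r.  Vertex (s, u) of the original ABP is
  encoded as the number s * r + u < r * (D + 1); the codes actually used are the valid ones.\<close>
locale bounded_affine_abp = affine_abp n D wd L
  for n D :: nat and wd :: "nat \<Rightarrow> nat" and L :: "nat \<Rightarrow> nat \<Rightarrow> nat \<Rightarrow> 'a::comm_ring_1 \<times> (nat \<Rightarrow> 'a)" +
  fixes r :: nat
  assumes wd_le_r: "\<forall>j\<le>D. wd j \<le> r" and r_pos: "1 \<le> r"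
begin

definition valid_code :: "nat \<Rightarrow> bool" where
  "valid_code e \<longleftrightarrow> e mod r < wd (e div r)"

lemma valid_code_0: "valid_code 0"
  using wd_source by (simp add: valid_code_def)

lemma sum_valid_codes:
  fixes g :: "nat \<Rightarrow> nat \<Rightarrow> 'b::comm_monoid_add"
  shows "(\<Sum>e<(D + 1) * r. if valid_code e then g (e div r) (e mod r) else 0) = (\<Sum>s\<le>D. \<Sum>u<wd s. g s u)"
proof -
  have "(\<Sum>e<(D + 1) * r. if valid_code e then g (e div r) (e mod r) else 0)
      = (\<Sum>s<D + 1. \<Sum>u<r. if u < wd s then g s u else 0)"
    unfolding sum_div_mod using r_pos by (intro sum.cong refl) (simp add: valid_code_def)
  also have "\<dots> = (\<Sum>s\<le>D. \<Sum>u<wd s. g s u)"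
  proof (rule sum.cong)
    fix s assume "s \<in> {..D}"
    then have "{u \<in> {..<r}. u < wd s} = {..<wd s}" using wd_le_r by auto
    then show "(\<Sum>u<r. if u < wd s then g s u else 0) = (\<Sum>u<wd s. g s u)"
      using sum.inter_filter[of "{..<r}" "g s" "\<lambda>u. u < wd s"] by simp
  qed auto
  finally show ?thesis .
qed

text \<open>The set-multilinear ABP of depth k + 1 computing node_part D 0 (k + 1): the inner layers
  consist of all codes, an edge into layer j carries the compressed edge read as a linear
  form in the j-th block of variables, and the edges into the sink carry the exit forms.\<close>
definition sml_width :: "nat \<Rightarrow> nat \<Rightarrow> nat" where
  "sml_width k j = (if j = 0 \<or> j = Suc k then 1 else r * (D + 1))"

definition sml_coeff :: "nat \<Rightarrow> nat \<Rightarrow> nat \<Rightarrow> nat \<Rightarrow> nat \<Rightarrow> 'a" where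
  "sml_coeff k j e e' = (if valid_code e
     then (if j = Suc k then exit_form (e div r) (e mod r)
           else jump_form (e div r) (e mod r) (e' div r) (e' mod r))
     else (\<lambda>i. 0))"

lemma sml_coeff_inner:
  "j \<noteq> Suc k \<Longrightarrow> sml_coeff k j e e' =
     (if valid_code e then jump_form (e div r) (e mod r) (e' div r) (e' mod r) else (\<lambda>i. 0))"
  by (simp add: sml_coeff_def)

lemma sml_coeff_last:
  "sml_coeff k (Suc k) e e' = (if valid_code e then exit_form (e div r) (e mod r) else (\<lambda>i. 0))"
  by (simp add: sml_coeff_def)

definition sml_label :: "nat \<Rightarrow> nat \<Rightarrow> nat \<Rightarrow> nat \<Rightarrow> (nat \<times> nat, 'a) cpoly" where
  "sml_label k j e e' = lin_form n j (sml_coeff k j e e')"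

lemma sml_layer_step:
  assumes "j < Suc k"
    and IH: "\<And>e. e < sml_width k j \<Longrightarrow> valid_code e \<Longrightarrow>
      abp_forward (sml_width k) (sml_label k) j e = entry_part j (e div r) (e mod r)"
  shows "(\<Sum>e<sml_width k j. abp_forward (sml_width k) (sml_label k) j e *
            lin_form n (Suc j) (if valid_code e then Z (e div r) (e mod r) else (\<lambda>i. 0)))
       = (\<Sum>s\<le>D. \<Sum>u<wd s. entry_part j s u * lin_form n (Suc j) (Z s u))"
proof (cases "j = 0")
  case True
  have "(\<Sum>u<wd s. entry_part 0 s u * lin_form n (Suc 0) (Z s u)) = (if s = 0 then lin_form n (Suc 0) (Z 0 0) else 0)" for s
    using wd_source by (auto simp: lessThan_Suc)
  then show ?thesis
    using True valid_code_0 by (simp add: sml_width_def sum.delta)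
next
  case False
  then have width: "sml_width k j = (D + 1) * r" using assms(1) by (simp add: sml_width_def)
  have "(\<Sum>e<sml_width k j. abp_forward (sml_width k) (sml_label k) j e *
            lin_form n (Suc j) (if valid_code e then Z (e div r) (e mod r) else (\<lambda>i. 0)))
      = (\<Sum>e<(D + 1) * r. if valid_code e then entry_part j (e div r) (e mod r) * lin_form n (Suc j) (Z (e div r) (e mod r)) else 0)"
    unfolding width using IH width by (intro sum.cong refl) auto
  with sum_valid_codes[of "\<lambda>s u. entry_part j s u * lin_form n (Suc j) (Z s u)"] show ?thesis
    by simp
qed

lemma sml_forward:
  "j < Suc k \<Longrightarrow> e < sml_width k j \<Longrightarrow> valid_code e \<Longrightarrow>
     abp_forward (sml_width k) (sml_label k) j e = entry_part j (e div r) (e mod r)"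
proof (induction j arbitrary: e)
  case 0
  then show ?case by (simp add: sml_width_def)
next
  case (Suc j)
  have j: "j < Suc k" "Suc j \<noteq> Suc k" using Suc.prems by auto
  then have "e < (D + 1) * r" using Suc.prems by (simp add: sml_width_def mult.commute)
  then have "e div r \<le> D"
    by (metis less_Suc_eq_le Suc_eq_plus1 less_mult_imp_div_less)
  moreover have "abp_forward (sml_width k) (sml_label k) (Suc j) e
      = (\<Sum>e'<sml_width k j. abp_forward (sml_width k) (sml_label k) j e' *
          lin_form n (Suc j) (if valid_code e' then jump_form (e' div r) (e' mod r) (e div r) (e mod r) else (\<lambda>i. 0)))"
    using j by (simp add: sml_label_def sml_coeff_inner)
  ultimately show ?case
    using sml_layer_step[OF j(1) Suc.IH[OF j(1)]] by (simp del: entry_part.simps add: entry_part_Suc)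
qed

lemma sml_abp_value: "abp_poly (Suc k) (sml_width k) (sml_label k) = node_part D 0 (Suc k)"
proof -
  have "abp_poly (Suc k) (sml_width k) (sml_label k) = abp_forward (sml_width k) (sml_label k) (Suc k) 0"
    by (rule abp_poly_forward) (simp_all add: sml_width_def)
  also have "\<dots> = (\<Sum>e<sml_width k k. abp_forward (sml_width k) (sml_label k) k e *
      lin_form n (Suc k) (if valid_code e then exit_form (e div r) (e mod r) else (\<lambda>i. 0)))"
    by (simp add: sml_label_def sml_coeff_last)
  also have "\<dots> = (\<Sum>s\<le>D. \<Sum>u<wd s. entry_part k s u * lin_form n (Suc k) (exit_form s u))"
    by (rule sml_layer_step) (use sml_forward in auto)
  also have "\<dots> = node_part D 0 (Suc k)"
    by (rule node_part_sink[symmetric])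
  finally show ?thesis .
qed

lemma node_part_set_multilinear: "node_part D 0 (Suc k) \<in> sml_abp_polys n (r * (D + 1)) (Suc k)"
  unfolding sml_abp_polys_def
proof (intro CollectI exI conjI)
  show "abp_shape (r * (D + 1)) (Suc k) (sml_width k)"
    using r_pos by (auto simp: abp_shape_def sml_width_def)
  show "node_part D 0 (Suc k) = abp_poly (Suc k) (sml_width k)
     (\<lambda>j u v. \<Sum>i<n. Poly_Mapping.single (Poly_Mapping.single (i, j) 1) (sml_coeff k j u v i))"
    using sml_abp_value[of k] by (simp add: sml_label_def[abs_def] lin_form_def)
qed

end

lemma nc_abp_pos_images:
  fixes f :: "(nat, 'a::comm_ring_1) ncpoly"
  assumes "nc_abp_computes n r D f" "1 \<le> r"
  shows "D < k \<Longrightarrow> pos_image k f = 0"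
    and "pos_image (Suc k) f \<in> sml_abp_polys n (r * (D + 1)) (Suc k)"
proof -
  obtain wd and L :: "nat \<Rightarrow> nat \<Rightarrow> nat \<Rightarrow> 'a \<times> (nat \<Rightarrow> 'a)"
    where shape: "abp_shape r D wd" and f: "f = abp_poly D wd (\<lambda>j u v. affine_nc n (L j u v))"
    using assms(1) unfolding nc_abp_computes_def by blast
  interpret bounded_affine_abp n D wd L r
    using shape assms(2) by unfold_locales (auto simp: abp_shape_def)
  have part: "pos_image k f = node_part D 0 k" for k
    by (simp add: f abp_poly_node_poly node_part_def)
  show "D < k \<Longrightarrow> pos_image k f = 0"
    by (simp add: part node_part_high_degree)
  show "pos_image (Suc k) f \<in> sml_abp_polys n (r * (D + 1)) (Suc k)"
    unfolding part by (rule node_part_set_multilinear)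
qed

theorem theorem4p5:
  fixes D n r :: nat
    and H :: "(nat \<times> nat \<Rightarrow> 'a::field) set"
    and f :: "(nat, 'a) ncpoly"
  assumes "D \<ge> 1" and "n \<ge> 1" and "r \<ge> 1"
    and "H \<noteq> {}"
    and "\<forall>l\<in>{1..D}. hitting_set H (sml_abp_polys n (r * (D + 1)) l)"
    and "nc_abp_computes n r D f"
  shows "f = 0 \<longleftrightarrow>
    (\<forall>A\<in>(\<lambda>h. (\<lambda>i. Xmat D h i)) ` H. is_zero_mat (D + 1) (nc_eval (D + 1) A f))"
proof
  assume "f = 0"
  then show "\<forall>A\<in>(\<lambda>h. (\<lambda>i. Xmat D h i)) ` H. is_zero_mat (D + 1) (nc_eval (D + 1) A f)"
    by (simp add: is_zero_mat_def nc_eval_def)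
next
  assume vanish: "\<forall>A\<in>(\<lambda>h. (\<lambda>i. Xmat D h i)) ` H. is_zero_mat (D + 1) (nc_eval (D + 1) A f)"
  have on_H: "ceval (pos_image k f) h = 0" if "h \<in> H" "k \<le> D" for h k
    using vanish that nc_eval_Xmat_entry[of k D h f] by (auto simp: is_zero_mat_def)
  have "pos_image k f = 0" for k
  proof (cases k)
    case 0
    obtain h where "h \<in> H" using assms(4) by blast
    then have "Poly_Mapping.lookup f 0 = 0" using on_H[of h 0] by (simp add: ceval_pos_image_0)
    then show ?thesis using 0 by (simp add: pos_image_0)
  next
    case (Suc l)
    show ?thesis
    proof (cases "k \<le> D")
      case True
      then have "hitting_set H (sml_abp_polys n (r * (D + 1)) k)" using assms(5) Suc by auto
      then show ?thesis
        using nc_abp_pos_images(2)[OF assms(6,3), of l] on_H True Suc unfolding hitting_set_def by blast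
    qed (use nc_abp_pos_images(1)[OF assms(6,3)] in auto)
  qed
  then show "f = 0" by (rule pos_images_zero_imp_zero)
qed

end
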